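(* Let $k$ be an infinite field, let $\sigma\colon\Gamma\to2^V$ be a quasi-geometric homology triangulation of a simplex, and let $E$ be a face of $\Gamma$. Then there is a special l.s.o.p. for $k[\mathrm{lk}_\Gamma(E)]$.
   Context: Homology is with coefficients in $k$. A $d$-dimensional simplicial complex $\Gamma$ with trivial reduced homology is a homology ball of dimension $d$ if there is a subcomplex $\partial\Gamma$ such that $\partial\Gamma$ is a homology sphere of dimension $d-1$, $\mathrm{lk}_\Gamma(F)$ is a homology sphere of dimension $d-|F|$ for $F\notin\partial\Gamma$, and $\mathrm{lk}_\Gamma(F)$ is a homology ball of dimension $d-|F|$ for nonempty $F\in\partial\Gamma$; its interior faces are those not in $\partial\Gamma$. A homology triangulation of $2^V$ is a finite simplicial complex $\Gamma$ with $\sigma\colon\Gamma\to2^V$ such that for every nonempty $U\subset V$, $\Gamma_U:=\sigma^{-1}(2^U)$ is a homology ball of dimension $|U|-1$ whose interior faces are exactly $\sigma^{-1}(U)$. $\sigma(F)$ is the carrier; $\sigma(w)=\sigma(\{w\})$. It is quasi-geometric if there is no face $F$ and $U\subset V$ with $\dim\Gamma_U<\dim F$ and $\sigma(w)\subset U$ for all vertices $w\in F$. $k[\Delta]$ is the face ring (variables $x_w$, $x^F=\prod_{w\in F}x_w$), graded by degree; the support of $\sum a_wx_w$ is $\{w:a_w\ne0\}$. An l.s.o.p. for a finitely generated graded $k$-algebra of Krull dimension $d$ is a sequence of $d$ degree-one elements with finite-dimensional quotient. For a face $E$, an l.s.o.p. $\theta_1,\ldots,\theta_d$ of $k[\mathrm{lk}_\Gamma(E)]$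 ($d=|V|-|E|$) is special if for each $v\in V\smallsetminus\sigma(E)$ there is an element $\theta_v$ of it whose support consists of vertices $w$ of $\mathrm{lk}_\Gamma(E)$ with $v\in\sigma(w)$, with $\theta_v\ne\theta_{v'}$ for $v\ne v'$. *)

theory Defs
  imports Main "HOL-Library.Poly_Mapping"
begin

(* A (finite) simplicial complex on vertex type 'w is a finite family of finite sets
   closed under taking subsets. The void complex {} is allowed; {{}} is the (-1)-sphere. *)
definition simplicial_complex :: "'w set set \<Rightarrow> bool" where
  "simplicial_complex \<Delta> \<longleftrightarrow> finite \<Delta> \<and> (\<forall>F\<in>\<Delta>. finite F) \<and> (\<forall>F\<in>\<Delta>. \<forall>G. G \<subseteq> F \<longrightarrow> G \<in> \<Delta>)"

definition has_dim :: "'w set set \<Rightarrow> int \<Rightarrow> bool" where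
  "has_dim \<Delta> d \<longleftrightarrow> (\<exists>F\<in>\<Delta>. int (card F) = d + 1) \<and> (\<forall>F\<in>\<Delta>. int (card F) \<le> d + 1)"

(* dimension as a number (with dim {} = dim {{}} = -1) *)
definition sc_dim :: "'w set set \<Rightarrow> int" where
  "sc_dim \<Delta> = int (Max (insert 0 (card ` \<Delta>))) - 1"

definition link :: "'w set set \<Rightarrow> 'w set \<Rightarrow> 'w set set" where
  "link \<Delta> F = {G \<in> \<Delta>. G \<inter> F = {} \<and> G \<union> F \<in> \<Delta>}"

definition vertices :: "'w set set \<Rightarrow> 'w set" where
  "vertices \<Delta> = \<Union>\<Delta>"

(* Chains of faces of cardinality n (i.e. of dimension n-1), as coefficient functions. *)
definition chains :: "'w set set \<Rightarrow> nat \<Rightarrow> ('w set \<Rightarrow> 'k::field) set" where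
  "chains \<Delta> n = {c. \<forall>G. c G \<noteq> 0 \<longrightarrow> G \<in> \<Delta> \<and> card G = n}"

(* Augmented simplicial boundary, using the vertex order for orientations:
   (bd c)(G) = sum over faces H = G + v of [H : G] c(H), with [H:G] = (-1)^(#{u in G. u < v}). *)
definition bd :: "'w::linorder set set \<Rightarrow> ('w set \<Rightarrow> 'k::field) \<Rightarrow> 'w set \<Rightarrow> 'k" where
  "bd \<Delta> c G = (if G \<in> \<Delta> then
      (\<Sum>v\<in>{v. v \<notin> G \<and> insert v G \<in> \<Delta>}. (-1) ^ card {u\<in>G. u < v} * c (insert v G))
    else 0)"

definition cycles :: "'w::linorder set set \<Rightarrow> nat \<Rightarrow> ('w set \<Rightarrow> 'k::field) set" where
  "cycles \<Delta> n = {c \<in> chains \<Delta> n. bd \<Delta> c = (\<lambda>_. 0)}"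

definition boundaries :: "'w::linorder set set \<Rightarrow> nat \<Rightarrow> ('w set \<Rightarrow> 'k::field) set" where
  "boundaries \<Delta> n = bd \<Delta> ` chains \<Delta> (Suc n)"

(* reduced homology in dimension n-1 (faces of cardinality n) vanishes *)
definition hom_vanishes :: "'k::field itself \<Rightarrow> 'w::linorder set set \<Rightarrow> nat \<Rightarrow> bool" where
  "hom_vanishes _ \<Delta> n \<longleftrightarrow> (cycles \<Delta> n :: ('w set \<Rightarrow> 'k) set) \<subseteq> boundaries \<Delta> n"

(* reduced homology in dimension n-1 is one-dimensional, i.e. isomorphic to k *)
definition hom_is_k :: "'k::field itself \<Rightarrow> 'w::linorder set set \<Rightarrow> nat \<Rightarrow> bool" where
  "hom_is_k _ \<Delta> n \<longleftrightarrow> (\<exists>z::'w set \<Rightarrow> 'k. z \<in> cycles \<Delta> n \<and> z \<notin> boundaries \<Delta> n \<and>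
      (\<forall>c\<in>cycles \<Delta> n. \<exists>a. \<exists>b\<in>boundaries \<Delta> n. c = (\<lambda>G. a * z G + b G)))"

definition acyclic :: "'k::field itself \<Rightarrow> 'w::linorder set set \<Rightarrow> bool" where
  "acyclic K \<Delta> \<longleftrightarrow> (\<forall>n. hom_vanishes K \<Delta> n)"

(* homology sphere of dimension d: for every face F (including the empty face), the link of F
   has the reduced homology of a (d-|F|)-sphere. *)
definition hsphere :: "'k::field itself \<Rightarrow> int \<Rightarrow> 'w::linorder set set \<Rightarrow> bool" where
  "hsphere K d \<Delta> \<longleftrightarrow> simplicial_complex \<Delta> \<and> has_dim \<Delta> d \<and>
     (\<forall>F\<in>\<Delta>. \<forall>n::nat.
        (int n = d - int (card F) + 1 \<longrightarrow> hom_is_k K (link \<Delta> F) n) \<and>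
        (int n \<noteq> d - int (card F) + 1 \<longrightarrow> hom_vanishes K (link \<Delta> F) n))"

(* hball_bd K d \<Gamma> B: \<Gamma> is a homology ball of dimension d with boundary subcomplex B *)
inductive hball_bd :: "'k::field itself \<Rightarrow> int \<Rightarrow> 'w::linorder set set \<Rightarrow> 'w set set \<Rightarrow> bool"
  for K :: "'k::field itself" where
  "\<lbrakk> simplicial_complex \<Gamma>; has_dim \<Gamma> d; acyclic K \<Gamma>;
     B \<subseteq> \<Gamma>; simplicial_complex B; hsphere K (d - 1) B;
     \<forall>F\<in>\<Gamma>. F \<notin> B \<longrightarrow> hsphere K (d - int (card F)) (link \<Gamma> F);
     \<forall>F\<in>B. F \<noteq> {} \<longrightarrow> (\<exists>B'. hball_bd K (d - int (card F)) (link \<Gamma> F) B') \<rbrakk>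
   \<Longrightarrow> hball_bd K d \<Gamma> B"

definition restr :: "'w set set \<Rightarrow> ('w set \<Rightarrow> 'v set) \<Rightarrow> 'v set \<Rightarrow> 'w set set" where
  "restr \<Gamma> \<sigma> U = {F \<in> \<Gamma>. \<sigma> F \<subseteq> U}"

definition homology_triangulation ::
  "'k::field itself \<Rightarrow> 'w::linorder set set \<Rightarrow> ('w set \<Rightarrow> 'v set) \<Rightarrow> 'v set \<Rightarrow> bool" where
  "homology_triangulation K \<Gamma> \<sigma> V \<longleftrightarrow> finite V \<and> simplicial_complex \<Gamma> \<and> (\<forall>F\<in>\<Gamma>. \<sigma> F \<subseteq> V) \<and>
     (\<forall>U. U \<subseteq> V \<and> U \<noteq> {} \<longrightarrow>
        (\<exists>B. hball_bd K (int (card U) - 1) (restr \<Gamma> \<sigma> U) B \<and>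
             restr \<Gamma> \<sigma> U - B = {F \<in> \<Gamma>. \<sigma> F = U}))"

definition quasi_geometric :: "'w set set \<Rightarrow> ('w set \<Rightarrow> 'v set) \<Rightarrow> 'v set \<Rightarrow> bool" where
  "quasi_geometric \<Gamma> \<sigma> V \<longleftrightarrow>
     \<not> (\<exists>F\<in>\<Gamma>. \<exists>U. U \<subseteq> V \<and> sc_dim (restr \<Gamma> \<sigma> U) < int (card F) - 1 \<and> (\<forall>w\<in>F. \<sigma> {w} \<subseteq> U))"

(* polynomials over 'k in variables x_w, w \<in> W: monomials are 'w \<Rightarrow>\<^sub>0 nat *)
type_synonym ('w, 'k) mpoly = "('w \<Rightarrow>\<^sub>0 nat) \<Rightarrow>\<^sub>0 'k"

definition polys :: "'w set \<Rightarrow> ('w, 'k::comm_ring_1) mpoly set" where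
  "polys W = {p. \<forall>m. m \<in> Poly_Mapping.keys p \<longrightarrow> Poly_Mapping.keys m \<subseteq> W}"

definition const_poly :: "'k::comm_ring_1 \<Rightarrow> ('w, 'k) mpoly" where
  "const_poly a = Poly_Mapping.single 0 a"

definition xmon :: "'w set \<Rightarrow> ('w, 'k::comm_ring_1) mpoly" where
  "xmon F = Poly_Mapping.single (\<Sum>w\<in>F. Poly_Mapping.single w 1) 1"

definition lin_form :: "'w set \<Rightarrow> ('w \<Rightarrow> 'k::comm_ring_1) \<Rightarrow> ('w, 'k) mpoly" where
  "lin_form W a = (\<Sum>w\<in>W. Poly_Mapping.single (Poly_Mapping.single w 1) (a w))"

definition ideal_gen :: "('w, 'k::comm_ring_1) mpoly set \<Rightarrow> ('w, 'k) mpoly set \<Rightarrow> ('w, 'k) mpoly set" where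
  "ideal_gen R G = {\<Sum>g\<in>G'. h g * g | G' h. finite G' \<and> G' \<subseteq> G \<and> (\<forall>g\<in>G'. h g \<in> R)}"

(* degree-one elements of k[\<Delta>] are given by coefficient vectors a on the vertices;
   lsop \<Delta> \<theta>s: \<theta>s is a sequence of degree-one elements whose quotient
   k[\<Delta>]/(\<theta>s) is finite-dimensional over k (i.e. spanned by finitely many classes). *)
definition finite_quotient :: "'w set set \<Rightarrow> ('w \<Rightarrow> 'k::field) list \<Rightarrow> bool" where
  "finite_quotient \<Delta> \<theta>s \<longleftrightarrow>
     (\<exists>S. finite S \<and> S \<subseteq> polys (vertices \<Delta>) \<and>
        (\<forall>p\<in>polys (vertices \<Delta>). \<exists>c::('w, 'k) mpoly \<Rightarrow> 'k.
           p - (\<Sum>s\<in>S. const_poly (c s) * s) \<in>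
             ideal_gen (polys (vertices \<Delta>))
               ({xmon F | F. F \<subseteq> vertices \<Delta> \<and> F \<notin> \<Delta>} \<union> lin_form (vertices \<Delta>) ` set \<theta>s)))"

definition lsop :: "nat \<Rightarrow> 'w set set \<Rightarrow> ('w \<Rightarrow> 'k::field) list \<Rightarrow> bool" where
  "lsop d \<Delta> \<theta>s \<longleftrightarrow> length \<theta>s = d \<and>
     (\<forall>\<theta>\<in>set \<theta>s. \<forall>w. w \<notin> vertices \<Delta> \<longrightarrow> \<theta> w = 0) \<and>
     finite_quotient \<Delta> \<theta>s"

definition supp :: "('w \<Rightarrow> 'k::zero) \<Rightarrow> 'w set" where
  "supp a = {w. a w \<noteq> 0}"

definition special_lsop ::
  "'w set set \<Rightarrow> ('w set \<Rightarrow> 'v set) \<Rightarrow> 'v set \<Rightarrow> 'w set \<Rightarrow> ('w \<Rightarrow> 'k::field) list \<Rightarrow> bool" where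
  "special_lsop \<Gamma> \<sigma> V E \<theta>s \<longleftrightarrow>
     lsop (card V - card E) (link \<Gamma> E) \<theta>s \<and>
     (\<exists>\<theta>v :: 'v \<Rightarrow> ('w \<Rightarrow> 'k).
        (\<forall>v\<in>V - \<sigma> E. \<theta>v v \<in> set \<theta>s \<and>
            supp (\<theta>v v) \<subseteq> {w \<in> vertices (link \<Gamma> E). v \<in> \<sigma> {w}}) \<and>
        inj_on \<theta>v (V - \<sigma> E))"

end

theory Submission
  imports Defs "HOL-Library.Function_Algebras" "HOL-Library.Indicator_Function" "HOL.Vector_Spaces"
begin

text \<open>By the Kind--Kleinschmidt criterion, linear forms on the vertices of \<open>lk(E)\<close> form an l.s.o.p. as
  soon as their restrictions to every face \<open>F\<close> of the link span \<open>k\<^sup>F\<close>. Every face of the link lies in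
  a facet \<open>H - E\<close> with \<open>H\<close> a facet of \<open>\<Gamma>\<close>, and quasi-geometricity supplies Hall's condition for matching
  each \<open>v \<notin> \<sigma>(E)\<close> to a vertex of \<open>H - E\<close> whose carrier contains \<open>v\<close>; so the coordinate functions of
  \<open>H - E\<close> form a special family that works for the faces inside \<open>H\<close>. Over an infinite field, generic
  forms subject to the same support conditions then work for all faces at once.\<close>

section \<open>Hall's marriage theorem\<close>

definition neighbours :: "('a \<Rightarrow> 'b \<Rightarrow> bool) \<Rightarrow> 'b set \<Rightarrow> 'a set \<Rightarrow> 'b set" where
  "neighbours R Y T = {y \<in> Y. \<exists>x\<in>T. R x y}"

definition hall_condition :: "('a \<Rightarrow> 'b \<Rightarrow> bool) \<Rightarrow> 'a set \<Rightarrow> 'b set \<Rightarrow> bool" where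
  "hall_condition R X Y \<longleftrightarrow> (\<forall>T\<subseteq>X. card T \<le> card (neighbours R Y T))"

definition matching :: "('a \<Rightarrow> 'b \<Rightarrow> bool) \<Rightarrow> 'a set \<Rightarrow> 'b set \<Rightarrow> ('a \<Rightarrow> 'b) \<Rightarrow> bool" where
  "matching R X Y f \<longleftrightarrow> inj_on f X \<and> (\<forall>x\<in>X. f x \<in> Y \<and> R x (f x))"

lemma matching_combine:
  assumes "matching R T Y\<^sub>1 f" "matching R (X - T) (Y - Y\<^sub>1) g" "Y\<^sub>1 \<subseteq> Y"
  shows "matching R X Y (\<lambda>x. if x \<in> T then f x else g x)"
proof -
  have f: "inj_on f T" "\<And>x. x \<in> T \<Longrightarrow> f x \<in> Y\<^sub>1 \<and> R x (f x)"
    and g: "inj_on g (X - T)" "\<And>x. x \<in> X - T \<Longrightarrow> g x \<in> Y - Y\<^sub>1 \<and> R x (g x)"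
    using assms(1,2) unfolding matching_def by blast+
  have "x = x'"
    if "x \<in> X" "x' \<in> X" "(if x \<in> T then f x else g x) = (if x' \<in> T then f x' else g x')" for x x'
    using that f g by (cases "x \<in> T"; cases "x' \<in> T") (force dest: inj_onD)+
  then show ?thesis
    using f g assms(3) unfolding matching_def inj_on_def by auto
qed

lemma hall_condition_neighbours:
  assumes "hall_condition R X Y" "T \<subseteq> X"
  shows "hall_condition R T (neighbours R Y T)"
  unfolding hall_condition_def
proof (intro allI impI)
  fix S
  assume "S \<subseteq> T"
  then have "neighbours R (neighbours R Y T) S = neighbours R Y S"
    unfolding neighbours_def by blast
  then show "card S \<le> card (neighbours R (neighbours R Y T) S)"
    using assms \<open>S \<subseteq> T\<close> unfolding hall_condition_def by auto
qed

lemma hall_condition_Diff_critical: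
  assumes hall: "hall_condition R X Y" and "finite X" "finite Y" "T \<subseteq> X"
    and critical: "card (neighbours R Y T) \<le> card T"
  shows "hall_condition R (X - T) (Y - neighbours R Y T)"
  unfolding hall_condition_def
proof (intro allI impI)
  fix S
  assume "S \<subseteq> X - T"
  then have "finite T" "finite S" "S \<inter> T = {}" "S \<union> T \<subseteq> X"
    using assms(2,4) by (auto intro: finite_subset)
  then have "card S + card T = card (S \<union> T)"
    by (simp add: card_Un_disjoint)
  also have "\<dots> \<le> card (neighbours R Y (S \<union> T))"
    using hall \<open>S \<union> T \<subseteq> X\<close> unfolding hall_condition_def by blast
  also have "neighbours R Y (S \<union> T) = neighbours R (Y - neighbours R Y T) S \<union> neighbours R Y T"
    unfolding neighbours_def by blast
  also have "card \<dots> = card (neighbours R (Y - neighbours R Y T) S) + card (neighbours R Y T)"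
    using \<open>finite Y\<close> by (intro card_Un_disjoint) (auto simp: neighbours_def)
  finally show "card S \<le> card (neighbours R (Y - neighbours R Y T) S)"
    using critical by simp
qed

lemma hall_condition_Diff_surplus:
  assumes surplus: "\<And>S. S \<subseteq> X \<Longrightarrow> S \<noteq> {} \<Longrightarrow> S \<noteq> X \<Longrightarrow> card S < card (neighbours R Y S)"
    and "x\<^sub>0 \<in> X"
  shows "hall_condition R (X - {x\<^sub>0}) (Y - {y\<^sub>0})"
  unfolding hall_condition_def
proof (intro allI impI)
  fix S
  assume S: "S \<subseteq> X - {x\<^sub>0}"
  show "card S \<le> card (neighbours R (Y - {y\<^sub>0}) S)"
  proof (cases "S = {}")
    case False
    then have "card S < card (neighbours R Y S)"
      using S assms(2) by (intro surplus) auto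
    moreover have "neighbours R (Y - {y\<^sub>0}) S = neighbours R Y S - {y\<^sub>0}"
      unfolding neighbours_def by blast
    moreover have "card (neighbours R Y S) - card {y\<^sub>0} \<le> card (neighbours R Y S - {y\<^sub>0})"
      by (rule diff_card_le_card_Diff) simp
    ultimately show ?thesis
      by simp
  qed simp
qed

text \<open>Halmos--Vaughan: split along a critical set \<open>T\<close> (one with \<open>|N(T)| = |T|\<close>) if there is one;
  otherwise every proper subset has a surplus neighbour, so any edge can be used.\<close>

theorem hall_marriage:
  assumes "finite X" "finite Y" "hall_condition R X Y"
  shows "\<exists>f. matching R X Y f"
  using assms
proof (induction "card X" arbitrary: X Y rule: less_induct)
  case less
  show ?case
  proof (cases "\<exists>T. T \<subseteq> X \<and> T \<noteq> {} \<and> T \<noteq> X \<and> card (neighbours R Y T) \<le> card T")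
    case True
    then obtain T where T: "T \<subseteq> X" "T \<noteq> {}" "T \<noteq> X" "card (neighbours R Y T) \<le> card T"
      by blast
    have "card T < card X" "card (X - T) < card X"
      using T less.prems(1) by (auto intro: psubset_card_mono)
    moreover have "finite T" "finite (neighbours R Y T)" "neighbours R Y T \<subseteq> Y"
      using T(1) less.prems(1,2) by (auto intro: finite_subset simp: neighbours_def)
    ultimately obtain f g where f: "matching R T (neighbours R Y T) f"
      and g: "matching R (X - T) (Y - neighbours R Y T) g"
      using less.hyps[OF _ _ _ hall_condition_neighbours[OF less.prems(3) T(1)]]
        less.hyps[OF _ _ _ hall_condition_Diff_critical[OF less.prems(3,1,2) T(1,4)]] less.prems(1,2)
      by blast
    show ?thesis
      using matching_combine[OF f g \<open>neighbours R Y T \<subseteq> Y\<close>] by blast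
  next
    case False
    then have surplus: "card S < card (neighbours R Y S)" if "S \<subseteq> X" "S \<noteq> {}" "S \<noteq> X" for S
      using that not_le by blast
    show ?thesis
    proof (cases "X = {}")
      case False
      then obtain x\<^sub>0 where "x\<^sub>0 \<in> X"
        by blast
      then have "card {x\<^sub>0} \<le> card (neighbours R Y {x\<^sub>0})"
        using less.prems(3) unfolding hall_condition_def by blast
      then have "neighbours R Y {x\<^sub>0} \<noteq> {}"
        by auto
      then obtain y\<^sub>0 where y\<^sub>0: "y\<^sub>0 \<in> Y" "R x\<^sub>0 y\<^sub>0"
        unfolding neighbours_def by blast
      have "card (X - {x\<^sub>0}) < card X"
        using less.prems(1) \<open>x\<^sub>0 \<in> X\<close> by (rule card_Diff1_less)
      then obtain g where "matching R (X - {x\<^sub>0}) (Y - {y\<^sub>0}) g"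
        using less.hyps[OF _ _ _ hall_condition_Diff_surplus[OF surplus \<open>x\<^sub>0 \<in> X\<close>]] less.prems(1,2)
        by blast
      moreover have "matching R {x\<^sub>0} {y\<^sub>0} (\<lambda>_. y\<^sub>0)"
        using y\<^sub>0 by (simp add: matching_def)
      ultimately show ?thesis
        using matching_combine[of R "{x\<^sub>0}" "{y\<^sub>0}" _ X Y g] y\<^sub>0 by blast
    qed (auto simp: matching_def)
  qed
qed

section \<open>Generic choices over an infinite field\<close>

context vector_space
begin

lemma finite_line_meets_subspace:
  assumes "subspace B" "x \<notin> B"
  shows "finite {t. x + t *s y \<in> B}"
proof -
  have uniq: "t = s" if "x + t *s y \<in> B" "x + s *s y \<in> B" for t s
  proof (rule ccontr)
    assume "t \<noteq> s"
    have "(t - s) *s y \<in> B"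
      using subspace_diff[OF assms(1) that] by (simp add: scale_left_diff_distrib)
    then have "inverse (t - s) *s ((t - s) *s y) \<in> B"
      by (rule subspace_scale[OF assms(1)])
    then have "y \<in> B"
      using \<open>t \<noteq> s\<close> by simp
    then have "x + t *s y - t *s y \<in> B"
      using assms(1) that(1) by (intro subspace_diff subspace_scale)
    then show False
      using assms(2) by simp
  qed
  then show ?thesis
  proof (cases "\<exists>t. x + t *s y \<in> B")
    case True
    then obtain t where "x + t *s y \<in> B" by blast
    with uniq have "{t. x + t *s y \<in> B} \<subseteq> {t}" by blast
    then show ?thesis by (rule finite_subset) simp
  qed simp
qed

lemma finite_line_meets_finite:
  assumes "y \<noteq> 0" "finite Q"
  shows "finite {t. x + t *s y \<in> Q}"
proof -
  have "inj (\<lambda>t. x + t *s y)"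
    using assms(1) by (auto intro: injI)
  then show ?thesis
    using finite_vimageI[OF assms(2)] by (simp add: vimage_def)
qed

lemma subspace_not_covered_by_subspaces:
  assumes "infinite (UNIV :: 'a set)" "subspace A" "finite \<B>"
    and "\<And>B. B \<in> \<B> \<Longrightarrow> subspace B \<and> \<not> A \<subseteq> B"
  shows "\<exists>x\<in>A. \<forall>B\<in>\<B>. x \<notin> B"
  using assms(3,4)
proof (induction \<B> rule: finite_induct)
  case empty
  then show ?case
    using subspace_0[OF assms(2)] by blast
next
  case (insert B \<B>)
  then obtain x where x: "x \<in> A" "\<forall>B'\<in>\<B>. x \<notin> B'"
    by auto
  obtain y where y: "y \<in> A" "y \<notin> B" and "subspace B"
    using insert.prems by blast
  show ?case
  proof (cases "x \<in> B")
    case True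
    \<comment> \<open>on the line \<open>x + t y\<close> only \<open>t = 0\<close> lies in \<open>B\<close>, and each other \<open>B'\<close> is met at most once\<close>
    have "finite (insert 0 (\<Union>B'\<in>\<B>. {t. x + t *s y \<in> B'}))"
      using insert x by (auto intro!: finite_line_meets_subspace)
    then obtain t where "t \<notin> insert 0 (\<Union>B'\<in>\<B>. {t. x + t *s y \<in> B'})"
      using assms(1) ex_new_if_finite by blast
    then have t: "t \<noteq> 0" "\<forall>B'\<in>\<B>. x + t *s y \<notin> B'"
      by auto
    have "x + t *s y \<notin> B"
    proof
      assume "x + t *s y \<in> B"
      then have "inverse t *s (x + t *s y - x) \<in> B"
        using \<open>subspace B\<close> True by (intro subspace_scale subspace_diff)
      then show False
        using y(2) t(1) by simp
    qed
    then show ?thesis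
      using t assms(2) x(1) y(1) by (intro bexI[of _ "x + t *s y"]) (auto intro: subspace_add subspace_scale)
  qed (use x in auto)
qed

lemma subspace_not_covered_by_subspaces_finite:
  assumes "infinite (UNIV :: 'a set)" "subspace A" "finite \<B>"
    and "\<And>B. B \<in> \<B> \<Longrightarrow> subspace B \<and> \<not> A \<subseteq> B"
    and "finite Q" "Q \<noteq> {} \<Longrightarrow> \<exists>y\<in>A. y \<noteq> 0"
  shows "\<exists>x\<in>A. (\<forall>B\<in>\<B>. x \<notin> B) \<and> x \<notin> Q"
proof -
  obtain x where x: "x \<in> A" "\<forall>B\<in>\<B>. x \<notin> B"
    using subspace_not_covered_by_subspaces[OF assms(1-4)] by blast
  show ?thesis
  proof (cases "Q = {}")
    case False
    then obtain y where y: "y \<in> A" "y \<noteq> 0"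
      using assms(6) by blast
    have "finite (\<Union>B\<in>\<B>. {t. x + t *s y \<in> B})"
      using assms(3,4) x(2) by (auto intro: finite_line_meets_subspace)
    moreover have "finite {t. x + t *s y \<in> Q}"
      using y(2) assms(5) by (rule finite_line_meets_finite)
    ultimately obtain t where "t \<notin> (\<Union>B\<in>\<B>. {t. x + t *s y \<in> B}) \<union> {t. x + t *s y \<in> Q}"
      using assms(1) ex_new_if_finite by (metis finite_UnI)
    then have "\<forall>B\<in>\<B>. x + t *s y \<notin> B" "x + t *s y \<notin> Q"
      by auto
    then show ?thesis
      using assms(2) x(1) y(1) by (intro bexI[of _ "x + t *s y"]) (auto intro: subspace_add subspace_scale)
  qed (use x in blast)
qed

lemma insert_image_Diff: "i \<in> I \<Longrightarrow> insert (\<theta> i) (\<theta> ` (I - {i}) \<union> Z) = \<theta> ` I \<union> Z"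
  by (metis Un_insert_left image_insert insert_Diff)

lemma span_eq_UNIV_exchange:
  assumes "span (insert \<psi> S) = UNIV" "\<phi> \<notin> span S"
  shows "span (insert \<phi> S) = UNIV"
proof -
  have "\<psi> \<in> span (insert \<phi> S)"
    using in_span_insert[of \<phi> \<psi> S] assms by blast
  then have "insert \<psi> S \<subseteq> span (insert \<phi> S)"
    using span_superset by blast
  then have "span (insert \<psi> S) \<subseteq> span (insert \<phi> S)"
    by (rule span_minimal) simp
  then show ?thesis
    using assms(1) by blast
qed

lemma span_eq_UNIV_fun_upd:
  assumes "span (\<theta> ` I \<union> Z) = UNIV" "i \<in> I"
    and "span (\<theta> ` (I - {i}) \<union> Z) \<noteq> UNIV \<Longrightarrow> \<phi> \<notin> span (\<theta> ` (I - {i}) \<union> Z)"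
  shows "span (\<theta>(i := \<phi>) ` I \<union> Z) = UNIV"
proof -
  let ?S = "\<theta> ` (I - {i}) \<union> Z"
  have old: "span (insert (\<theta> i) ?S) = UNIV"
    unfolding insert_image_Diff[OF assms(2)] by (rule assms(1))
  have new: "\<theta>(i := \<phi>) ` I \<union> Z = insert \<phi> ?S"
    using assms(2) by (simp only: fun_upd_image if_True Un_insert_left)
  show ?thesis
  proof (cases "span ?S = UNIV")
    case True
    then show ?thesis
      unfolding new using span_mono[of ?S "insert \<phi> ?S"] by auto
  next
    case False
    show ?thesis
      unfolding new by (rule span_eq_UNIV_exchange[OF old assms(3)[OF False]])
  qed
qed

lemma generic_choice_step:
  assumes "infinite (UNIV :: 'a set)" "i \<in> I" "subspace A" "finite \<Z>"
    and spanning: "\<And>Z. Z \<in> \<Z> \<Longrightarrow> \<Theta> Z i \<in> A \<and> span (\<Theta> Z ` I \<union> Z) = UNIV"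
    and "finite Q" "Q \<noteq> {} \<Longrightarrow> \<exists>y\<in>A. y \<noteq> 0"
  shows "\<exists>\<phi>\<in>A. \<phi> \<notin> Q \<and> (\<forall>Z\<in>\<Z>. span ((\<Theta> Z)(i := \<phi>) ` I \<union> Z) = UNIV)"
proof -
  define S where "S Z = \<Theta> Z ` (I - {i}) \<union> Z" for Z
  define \<B> where "\<B> = (\<lambda>Z. span (S Z)) ` {Z \<in> \<Z>. span (S Z) \<noteq> UNIV}"
  have bad: "subspace B \<and> \<not> A \<subseteq> B" if "B \<in> \<B>" for B
  proof -
    obtain Z where Z: "Z \<in> \<Z>" "span (S Z) \<noteq> UNIV" "B = span (S Z)"
      using \<open>B \<in> \<B>\<close> unfolding \<B>_def by blast
    have "span (insert (\<Theta> Z i) (S Z)) = UNIV"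
      unfolding S_def insert_image_Diff[OF \<open>i \<in> I\<close>] using spanning[OF Z(1)] by blast
    then have "\<Theta> Z i \<notin> B"
      using span_redundant[of "\<Theta> Z i" "S Z"] Z(2,3) by auto
    then show ?thesis
      using spanning[OF Z(1)] Z(3) by auto
  qed
  moreover have "finite \<B>"
    using \<open>finite \<Z>\<close> unfolding \<B>_def by simp
  ultimately obtain \<phi> where \<phi>: "\<phi> \<in> A" "\<forall>B\<in>\<B>. \<phi> \<notin> B" "\<phi> \<notin> Q"
    using subspace_not_covered_by_subspaces_finite[OF assms(1,3) _ _ assms(6,7)] by blast
  have "span ((\<Theta> Z)(i := \<phi>) ` I \<union> Z) = UNIV" if "Z \<in> \<Z>" for Z
  proof (rule span_eq_UNIV_fun_upd)
    show "span (\<Theta> Z ` I \<union> Z) = UNIV"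
      using spanning[OF that] by blast
    assume "span (\<Theta> Z ` (I - {i}) \<union> Z) \<noteq> UNIV"
    then have "span (S Z) \<in> \<B>"
      using that unfolding \<B>_def S_def by blast
    then show "\<phi> \<notin> span (\<Theta> Z ` (I - {i}) \<union> Z)"
      using \<phi>(2) unfolding S_def by blast
  qed fact
  then show ?thesis
    using \<phi>(1,3) by blast
qed

text \<open>The entries indexed by \<open>K\<close> are fixed one at a time, each to a generic vector of its subspace;
  by the exchange lemma every requirement \<open>Z\<close> keeps a completion of the entries fixed so far to a
  spanning tuple.\<close>

lemma generic_choice_on_subset:
  assumes "infinite (UNIV :: 'a set)" "finite K" "K \<subseteq> I" "finite \<Z>"
    and "\<And>i. i \<in> I \<Longrightarrow> subspace (A i)" "\<And>j. j \<in> J \<Longrightarrow> \<exists>y\<in>A j. y \<noteq> 0"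
    and "\<And>Z. Z \<in> \<Z> \<Longrightarrow> \<exists>\<theta>. (\<forall>i\<in>I. \<theta> i \<in> A i) \<and> span (\<theta> ` I \<union> Z) = UNIV"
  shows "\<exists>\<theta>. (\<forall>k\<in>K. \<theta> k \<in> A k) \<and> inj_on \<theta> (K \<inter> J) \<and>
           (\<forall>Z\<in>\<Z>. \<exists>\<theta>'. (\<forall>i\<in>I. \<theta>' i \<in> A i) \<and> (\<forall>k\<in>K. \<theta>' k = \<theta> k) \<and> span (\<theta>' ` I \<union> Z) = UNIV)"
  using assms(2,3)
proof (induction K rule: finite_induct)
  case empty
  then show ?case
    using assms(7) by simp
next
  case (insert i K)
  then have "i \<in> I" "K \<subseteq> I"
    by simp_all
  then obtain \<theta> where \<theta>: "\<forall>k\<in>K. \<theta> k \<in> A k" "inj_on \<theta> (K \<inter> J)" and completion: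
    "\<forall>Z\<in>\<Z>. \<exists>\<theta>'. (\<forall>i\<in>I. \<theta>' i \<in> A i) \<and> (\<forall>k\<in>K. \<theta>' k = \<theta> k) \<and> span (\<theta>' ` I \<union> Z) = UNIV"
    using insert.IH by blast
  obtain \<Theta> where \<Theta>: "\<forall>Z\<in>\<Z>. (\<forall>i\<in>I. \<Theta> Z i \<in> A i) \<and> (\<forall>k\<in>K. \<Theta> Z k = \<theta> k)
      \<and> span (\<Theta> Z ` I \<union> Z) = UNIV"
    using bchoice[OF completion] ..
  let ?Q = "if i \<in> J then \<theta> ` (K \<inter> J) else {}"
  have spanning: "\<Theta> Z i \<in> A i \<and> span (\<Theta> Z ` I \<union> Z) = UNIV" if "Z \<in> \<Z>" for Z
    using \<Theta> that \<open>i \<in> I\<close> by blast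
  have Q: "finite ?Q" "?Q \<noteq> {} \<Longrightarrow> \<exists>y\<in>A i. y \<noteq> 0"
    using insert.hyps(1) assms(6) by (simp_all split: if_splits)
  obtain \<phi> where \<phi>: "\<phi> \<in> A i" "\<phi> \<notin> ?Q" "\<forall>Z\<in>\<Z>. span ((\<Theta> Z)(i := \<phi>) ` I \<union> Z) = UNIV"
    using generic_choice_step[OF assms(1) \<open>i \<in> I\<close> assms(5)[OF \<open>i \<in> I\<close>] assms(4) spanning Q]
    by blast
  have "\<forall>Z\<in>\<Z>. (\<forall>i'\<in>I. ((\<Theta> Z)(i := \<phi>)) i' \<in> A i') \<and> (\<forall>k\<in>insert i K. ((\<Theta> Z)(i := \<phi>)) k = (\<theta>(i := \<phi>)) k)
      \<and> span ((\<Theta> Z)(i := \<phi>) ` I \<union> Z) = UNIV"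
    using \<Theta> \<phi>(1,3) by simp
  moreover have "inj_on (\<theta>(i := \<phi>)) (insert i K \<inter> J)"
  proof -
    have "inj_on (\<theta>(i := \<phi>)) (K \<inter> J)" "(\<theta>(i := \<phi>)) ` (K \<inter> J) = \<theta> ` (K \<inter> J)"
      using \<theta>(2) insert.hyps(2) by (auto simp: inj_on_def)
    then show ?thesis
      using \<phi>(2) insert.hyps(2) by (cases "i \<in> J") (simp_all add: Int_insert_left)
  qed
  moreover have "\<forall>k\<in>insert i K. (\<theta>(i := \<phi>)) k \<in> A k"
    using \<theta>(1) \<phi>(1) insert.hyps(2) by simp
  ultimately show ?case
    by blast
qed

lemma generic_choice:
  assumes "infinite (UNIV :: 'a set)" "finite I" "J \<subseteq> I" "finite \<Z>"
    and "\<And>i. i \<in> I \<Longrightarrow> subspace (A i)" "\<And>j. j \<in> J \<Longrightarrow> \<exists>y\<in>A j. y \<noteq> 0"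
    and "\<And>Z. Z \<in> \<Z> \<Longrightarrow> \<exists>\<theta>. (\<forall>i\<in>I. \<theta> i \<in> A i) \<and> span (\<theta> ` I \<union> Z) = UNIV"
  shows "\<exists>\<theta>. (\<forall>i\<in>I. \<theta> i \<in> A i) \<and> inj_on \<theta> J \<and> (\<forall>Z\<in>\<Z>. span (\<theta> ` I \<union> Z) = UNIV)"
proof -
  obtain \<theta> where "(\<forall>i\<in>I. \<theta> i \<in> A i) \<and> inj_on \<theta> (I \<inter> J) \<and>
      (\<forall>Z\<in>\<Z>. \<exists>\<theta>'. (\<forall>i\<in>I. \<theta>' i \<in> A i) \<and> (\<forall>i\<in>I. \<theta>' i = \<theta> i) \<and> span (\<theta>' ` I \<union> Z) = UNIV)"
    using generic_choice_on_subset[OF assms(1,2) order_refl assms(4-7)] ..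
  then have \<theta>: "\<forall>i\<in>I. \<theta> i \<in> A i" "inj_on \<theta> J" and completion:
    "\<forall>Z\<in>\<Z>. \<exists>\<theta>'. (\<forall>i\<in>I. \<theta>' i \<in> A i) \<and> (\<forall>i\<in>I. \<theta>' i = \<theta> i) \<and> span (\<theta>' ` I \<union> Z) = UNIV"
    using Int_absorb1[OF assms(3)] by simp_all
  have "span (\<theta> ` I \<union> Z) = UNIV" if Z: "Z \<in> \<Z>" for Z
  proof -
    obtain \<theta>' where "(\<forall>i\<in>I. \<theta>' i \<in> A i) \<and> (\<forall>i\<in>I. \<theta>' i = \<theta> i) \<and> span (\<theta>' ` I \<union> Z) = UNIV"
      using bspec[OF completion Z] ..
    moreover from this have "\<theta>' ` I = \<theta> ` I"
      by (intro image_cong) simp_all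
    ultimately show ?thesis
      by simp
  qed
  with \<theta> show ?thesis
    by blast
qed

end

section \<open>Linear forms as vectors\<close>

interpretation fun_space: vector_space "\<lambda>(a::'k::field) (f::'w \<Rightarrow> 'k) w. a * f w"
  by unfold_locales (simp_all add: fun_eq_iff algebra_simps)

lemma sum_fun_apply: "(\<Sum>i\<in>A. f i) x = (\<Sum>i\<in>A. f i x)"
  by (induction A rule: infinite_finite_induct) simp_all

text \<open>\<open>span (S \<union> vanishing_on G) = UNIV\<close> expresses that the restrictions to \<open>G\<close> of the functions in
  \<open>S\<close> span \<open>k\<^sup>G\<close>.\<close>

definition vanishing_on :: "'w set \<Rightarrow> ('w \<Rightarrow> 'k::zero) set" where
  "vanishing_on G = {f. \<forall>w\<in>G. f w = 0}"

lemma subspace_vanishing_on: "fun_space.subspace (vanishing_on G :: ('w \<Rightarrow> 'k::field) set)"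
  unfolding fun_space.subspace_def vanishing_on_def by simp

lemma interpolation_if_span_eq_UNIV:
  fixes S :: "('w \<Rightarrow> 'k::field) set"
  assumes "finite S" "fun_space.span (S \<union> vanishing_on G) = UNIV"
  shows "\<exists>c. \<forall>w\<in>G. (\<Sum>f\<in>S. c f * f w) = g w"
proof -
  have "g \<in> fun_space.span (S \<union> vanishing_on G)"
    using assms(2) by simp
  then obtain h z where h: "h \<in> fun_space.span S" and z: "z \<in> vanishing_on G" and "g = h + z"
    unfolding fun_space.span_Un fun_space.span_eq_iff[THEN iffD2, OF subspace_vanishing_on]
    by blast
  moreover obtain c where "h = (\<Sum>f\<in>S. (\<lambda>w. c f * f w))"
    using h fun_space.span_finite[OF assms(1)] by blast
  ultimately show ?thesis
    using z by (auto simp: vanishing_on_def sum_fun_apply)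
qed

lemma span_eq_UNIV_if_indicators:
  fixes S :: "('w \<Rightarrow> 'k::field) set"
  assumes "finite G" "(\<lambda>u. indicator {u}) ` G \<subseteq> S"
  shows "fun_space.span (S \<union> vanishing_on G) = UNIV"
proof -
  have "g \<in> fun_space.span (S \<union> vanishing_on G)" for g :: "'w \<Rightarrow> 'k"
  proof -
    define h where "h = (\<Sum>u\<in>G. (\<lambda>w. g u * indicator {u} w))"
    have "h \<in> fun_space.span (S \<union> vanishing_on G)"
      unfolding h_def using assms(2)
      by (intro fun_space.span_sum fun_space.span_scale fun_space.span_base) auto
    moreover have "g - h \<in> fun_space.span (S \<union> vanishing_on G)"
      using assms(1) by (intro fun_space.span_base)
        (simp add: vanishing_on_def h_def sum_fun_apply indicator_def)
    ultimately have "h + (g - h) \<in> fun_space.span (S \<union> vanishing_on G)"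
      by (rule fun_space.span_add)
    then show ?thesis
      by simp
  qed
  then show ?thesis
    by blast
qed

lemma subspace_supp_subset: "fun_space.subspace {\<theta> :: 'w \<Rightarrow> 'k::field. supp \<theta> \<subseteq> U}"
  unfolding fun_space.subspace_def
proof (intro conjI ballI allI)
  fix x y :: "'w \<Rightarrow> 'k" and c
  assume "x \<in> {\<theta>. supp \<theta> \<subseteq> U}" "y \<in> {\<theta>. supp \<theta> \<subseteq> U}"
  then have "supp x \<subseteq> U" "supp y \<subseteq> U"
    by simp_all
  moreover have "supp (x + y) \<subseteq> supp x \<union> supp y" "supp (\<lambda>w. c * x w) \<subseteq> supp x"
    unfolding supp_def by auto
  ultimately show "x + y \<in> {\<theta>. supp \<theta> \<subseteq> U}" "(\<lambda>w. c * x w) \<in> {\<theta>. supp \<theta> \<subseteq> U}"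
    by auto
qed (simp add: supp_def)

lemma supp_indicator_singleton: "supp (indicator {u} :: 'w \<Rightarrow> 'k::zero_neq_one) = {u}"
  unfolding supp_def by (simp add: indicator_def)

section \<open>Face rings modulo linear forms\<close>

lemma zero_in_polys: "0 \<in> polys W"
  unfolding polys_def by simp

lemma polys_add: "p \<in> polys W \<Longrightarrow> q \<in> polys W \<Longrightarrow> p + q \<in> polys W"
  using keys_add[of p q] unfolding polys_def by blast

lemma polys_mult:
  assumes "p \<in> polys W" "q \<in> polys W"
  shows "p * q \<in> polys W"
  unfolding polys_def
proof (intro CollectI allI impI)
  fix m
  assume "m \<in> Poly_Mapping.keys (p * q)"
  then obtain a b where "m = a + b" "a \<in> Poly_Mapping.keys p" "b \<in> Poly_Mapping.keys q"
    using keys_mult[of p q] by blast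
  then show "Poly_Mapping.keys m \<subseteq> W"
    using assms keys_add[of a b] unfolding polys_def by blast
qed

lemma polys_single: "Poly_Mapping.keys m \<subseteq> W \<Longrightarrow> Poly_Mapping.single m a \<in> polys W"
  unfolding polys_def by simp

lemma polys_const_poly: "const_poly a \<in> polys W"
  unfolding const_poly_def by (rule polys_single) simp

lemma const_poly_mult_single:
  "const_poly a * Poly_Mapping.single m b = Poly_Mapping.single m (a * b)"
  unfolding const_poly_def by (simp add: mult_single)

lemma single_sum: "Poly_Mapping.single k (sum f A) = (\<Sum>x\<in>A. Poly_Mapping.single k (f x))"
  by (induction A rule: infinite_finite_induct) (simp_all add: single_add)

lemma ideal_genI:
  "finite G' \<Longrightarrow> G' \<subseteq> G \<Longrightarrow> (\<And>g. g \<in> G' \<Longrightarrow> h g \<in> R) \<Longrightarrow> (\<Sum>g\<in>G'. h g * g) \<in> ideal_gen R G"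
  unfolding ideal_gen_def by blast

lemma ideal_gen_generator: "g \<in> G \<Longrightarrow> r \<in> R \<Longrightarrow> r * g \<in> ideal_gen R G"
  unfolding ideal_gen_def by (intro CollectI exI[of _ "{g}"] exI[of _ "\<lambda>_. r"]) simp

lemma ideal_gen_zero: "0 \<in> ideal_gen R G"
  unfolding ideal_gen_def by (intro CollectI exI[of _ "{}"]) simp

lemma ideal_gen_add:
  assumes "x \<in> ideal_gen (polys W) G" "y \<in> ideal_gen (polys W) G"
  shows "x + y \<in> ideal_gen (polys W) G"
proof -
  obtain G\<^sub>1 h\<^sub>1 where x: "x = (\<Sum>g\<in>G\<^sub>1. h\<^sub>1 g * g)" "finite G\<^sub>1" "G\<^sub>1 \<subseteq> G" "\<forall>g\<in>G\<^sub>1. h\<^sub>1 g \<in> polys W"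
    using assms(1) unfolding ideal_gen_def by blast
  obtain G\<^sub>2 h\<^sub>2 where y: "y = (\<Sum>g\<in>G\<^sub>2. h\<^sub>2 g * g)" "finite G\<^sub>2" "G\<^sub>2 \<subseteq> G" "\<forall>g\<in>G\<^sub>2. h\<^sub>2 g \<in> polys W"
    using assms(2) unfolding ideal_gen_def by blast
  define h where "h g = (if g \<in> G\<^sub>1 then h\<^sub>1 g else 0) + (if g \<in> G\<^sub>2 then h\<^sub>2 g else 0)" for g
  have "x = (\<Sum>g\<in>G\<^sub>1 \<union> G\<^sub>2. (if g \<in> G\<^sub>1 then h\<^sub>1 g else 0) * g)"
    unfolding x(1) using x(2) y(2) by (intro sum.mono_neutral_cong_left) auto
  moreover have "y = (\<Sum>g\<in>G\<^sub>1 \<union> G\<^sub>2. (if g \<in> G\<^sub>2 then h\<^sub>2 g else 0) * g)"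
    unfolding y(1) using x(2) y(2) by (intro sum.mono_neutral_cong_left) auto
  ultimately have "x + y = (\<Sum>g\<in>G\<^sub>1 \<union> G\<^sub>2. h g * g)"
    unfolding h_def by (simp add: distrib_right sum.distrib)
  also have "\<dots> \<in> ideal_gen (polys W) G"
    using x(2-4) y(2-4) unfolding h_def by (intro ideal_genI polys_add) (auto simp: zero_in_polys)
  finally show ?thesis .
qed

lemma ideal_gen_mult:
  assumes "x \<in> ideal_gen (polys W) G" "r \<in> polys W"
  shows "r * x \<in> ideal_gen (polys W) G"
proof -
  obtain G' h where x: "x = (\<Sum>g\<in>G'. h g * g)" "finite G'" "G' \<subseteq> G" "\<forall>g\<in>G'. h g \<in> polys W"
    using assms(1) unfolding ideal_gen_def by blast
  then have "r * x = (\<Sum>g\<in>G'. (r * h g) * g)"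
    by (simp add: sum_distrib_left mult.assoc)
  also have "\<dots> \<in> ideal_gen (polys W) G"
    using x(2-4) assms(2) by (intro ideal_genI) (auto intro: polys_mult)
  finally show ?thesis .
qed

lemma ideal_gen_diff:
  assumes "x \<in> ideal_gen (polys W) G" "y \<in> ideal_gen (polys W) G"
  shows "x - y \<in> ideal_gen (polys W) G"
proof -
  have "const_poly (-1) * y \<in> ideal_gen (polys W) G"
    using assms(2) polys_const_poly by (rule ideal_gen_mult)
  then have "x + const_poly (-1) * y \<in> ideal_gen (polys W) G"
    using assms(1) by (intro ideal_gen_add)
  moreover have "const_poly (-1) * y = - y"
    by (simp add: const_poly_def single_uminus)
  ultimately show ?thesis
    by simp
qed

lemma ideal_gen_sum:
  "(\<And>a. a \<in> A \<Longrightarrow> f a \<in> ideal_gen (polys W) G) \<Longrightarrow> sum f A \<in> ideal_gen (polys W) G"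
  by (induction A rule: infinite_finite_induct) (auto intro: ideal_gen_add ideal_gen_zero)

definition theta_ideal :: "'w set set \<Rightarrow> ('w \<Rightarrow> 'k::field) list \<Rightarrow> ('w, 'k) mpoly set" where
  "theta_ideal \<Delta> \<theta>s = ideal_gen (polys (vertices \<Delta>))
     ({xmon F | F. F \<subseteq> vertices \<Delta> \<and> F \<notin> \<Delta>} \<union> lin_form (vertices \<Delta>) ` set \<theta>s)"

lemma single_in_theta_ideal:
  "Poly_Mapping.single m 1 \<in> theta_ideal \<Delta> \<theta>s \<Longrightarrow> Poly_Mapping.single m a \<in> theta_ideal \<Delta> \<theta>s"
  using ideal_gen_mult[OF _ polys_const_poly, of _ _ _ a]
  unfolding theta_ideal_def by (fastforce simp: const_poly_mult_single)

lemma monomial_in_theta_ideal_if_nonface: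
  fixes \<theta>s :: "('w \<Rightarrow> 'k::field) list"
  assumes "Poly_Mapping.keys m \<subseteq> vertices \<Delta>" "Poly_Mapping.keys m \<notin> \<Delta>"
  shows "Poly_Mapping.single m 1 \<in> theta_ideal \<Delta> \<theta>s"
proof -
  define F where "F = Poly_Mapping.keys m"
  define \<chi> where "\<chi> = (\<Sum>w\<in>F. Poly_Mapping.single w (1::nat))"
  have \<chi>: "Poly_Mapping.lookup \<chi> u = (if u \<in> F then 1 else 0)" for u
    unfolding \<chi>_def F_def by (simp add: lookup_sum lookup_single when_def)
  have m: "m = (m - \<chi>) + \<chi>"
    by (rule poly_mapping_eqI) (auto simp: lookup_add lookup_minus \<chi> F_def in_keys_iff)
  have "Poly_Mapping.keys (m - \<chi>) \<subseteq> vertices \<Delta>"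
    using assms(1) by (auto simp: in_keys_iff lookup_minus \<chi> F_def)
  then have "Poly_Mapping.single (m - \<chi>) 1 * xmon F \<in> theta_ideal \<Delta> \<theta>s"
    unfolding theta_ideal_def using assms F_def
    by (intro ideal_gen_generator polys_single) auto
  moreover have "Poly_Mapping.single (m - \<chi>) 1 * xmon F = Poly_Mapping.single m (1::'k)"
    unfolding xmon_def \<chi>_def[symmetric] by (simp add: mult_single m[symmetric])
  ultimately show ?thesis
    by simp
qed

lemma lin_form_sum:
  assumes "finite W"
  shows "lin_form W (\<lambda>u. \<Sum>f\<in>T. c f * f u) = (\<Sum>f\<in>T. const_poly (c f) * lin_form W f)"
proof -
  have "lin_form W (\<lambda>u. \<Sum>f\<in>T. c f * f u)
      = (\<Sum>w\<in>W. \<Sum>f\<in>T. Poly_Mapping.single (Poly_Mapping.single w 1) (c f * f w))"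
    unfolding lin_form_def by (simp add: single_sum)
  also have "\<dots> = (\<Sum>f\<in>T. const_poly (c f) * lin_form W f)"
    unfolding lin_form_def by (subst sum.swap) (simp add: sum_distrib_left const_poly_mult_single)
  finally show ?thesis .
qed

lemma lin_form_sum_in_theta_ideal:
  assumes "finite (vertices \<Delta>)"
  shows "lin_form (vertices \<Delta>) (\<lambda>u. \<Sum>f\<in>set \<theta>s. c f * f u) \<in> theta_ideal \<Delta> \<theta>s"
  unfolding lin_form_sum[OF assms] theta_ideal_def
  by (intro ideal_gen_sum ideal_gen_generator polys_const_poly) auto

lemma single_mult_lin_form:
  assumes "finite W" "F \<subseteq> W" "w \<in> F" "\<forall>u\<in>F. \<alpha> u = indicator {w} u"
  shows "Poly_Mapping.single m 1 * lin_form W \<alpha> = Poly_Mapping.single (m + Poly_Mapping.single w 1) 1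
           + (\<Sum>u\<in>W - F. Poly_Mapping.single (m + Poly_Mapping.single u 1) (\<alpha> u))"
proof -
  let ?t = "\<lambda>u. Poly_Mapping.single (m + Poly_Mapping.single u 1) (\<alpha> u)"
  have "Poly_Mapping.single m 1 * lin_form W \<alpha> = (\<Sum>u\<in>W. ?t u)"
    unfolding lin_form_def by (simp add: sum_distrib_left mult_single)
  also have "\<dots> = (\<Sum>u\<in>F. ?t u) + (\<Sum>u\<in>W - F. ?t u)"
    using sum.subset_diff[OF assms(2,1)] by (simp add: add.commute)
  also have "(\<Sum>u\<in>F. ?t u) = (\<Sum>u\<in>F. if u = w then ?t w else 0)"
    using assms(4) by (intro sum.cong) auto
  also have "\<dots> = Poly_Mapping.single (m + Poly_Mapping.single w 1) 1"
    using assms finite_subset[OF assms(2,1)] by simp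
  finally show ?thesis .
qed

lemma exists_exponent_ge_2:
  assumes "finite W" "card W < sum (Poly_Mapping.lookup m) W"
  shows "\<exists>w\<in>W. 2 \<le> Poly_Mapping.lookup m w"
proof (rule ccontr)
  assume "\<not> ?thesis"
  then have "sum (Poly_Mapping.lookup m) W \<le> sum (\<lambda>_. 1) W"
    by (intro sum_mono) (auto simp: not_le)
  then show False
    using assms(2) by simp
qed

lemma keys_add_single:
  "Poly_Mapping.keys (m + Poly_Mapping.single u (1::nat)) = insert u (Poly_Mapping.keys m)"
  by (auto simp: in_keys_iff lookup_add lookup_single when_def split: if_splits)

lemma sum_lookup_add_single:
  "finite W \<Longrightarrow> u \<in> W \<Longrightarrow>
    sum (Poly_Mapping.lookup (m + Poly_Mapping.single u (1::nat))) W = sum (Poly_Mapping.lookup m) W + 1"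
  by (simp add: lookup_add lookup_single when_def sum.distrib)

lemma monomial_remove_variable:
  fixes m :: "'w \<Rightarrow>\<^sub>0 nat"
  assumes "2 \<le> Poly_Mapping.lookup m w"
  shows "m = (m - Poly_Mapping.single w 1) + Poly_Mapping.single w 1"
    "Poly_Mapping.keys (m - Poly_Mapping.single w 1) = Poly_Mapping.keys m"
  using assms by (auto simp: poly_mapping_eq_iff fun_eq_iff lookup_add lookup_minus lookup_single
      when_def in_keys_iff)

text \<open>If the support \<open>F\<close> of \<open>x\<^sup>m\<close> is a face, multiplying \<open>x\<^sup>m\<close> by the combination of the \<open>\<theta>s\<close> that
  restricts to \<open>x\<^sub>w\<close> on \<open>F\<close> gives \<open>x\<^sup>m x\<^sub>w\<close> up to monomials of strictly larger support.\<close>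

lemma monomial_in_theta_ideal_if_face:
  fixes \<theta>s :: "('w \<Rightarrow> 'k::field) list"
  assumes fin: "finite (vertices \<Delta>)"
    and span: "\<forall>F\<in>\<Delta>. fun_space.span (set \<theta>s \<union> vanishing_on F) = UNIV"
    and "Poly_Mapping.keys m \<in> \<Delta>" "Poly_Mapping.keys m \<subseteq> vertices \<Delta>" "w \<in> Poly_Mapping.keys m"
    and larger: "\<And>u. u \<in> vertices \<Delta> - Poly_Mapping.keys m \<Longrightarrow>
      Poly_Mapping.single (m + Poly_Mapping.single u 1) 1 \<in> theta_ideal \<Delta> \<theta>s"
  shows "Poly_Mapping.single (m + Poly_Mapping.single w 1) 1 \<in> theta_ideal \<Delta> \<theta>s"
proof -
  define W where "W = vertices \<Delta>"
  define F where "F = Poly_Mapping.keys m"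
  obtain c where c: "\<forall>u\<in>F. (\<Sum>f\<in>set \<theta>s. c f * f u) = indicator {w} u"
    using interpolation_if_span_eq_UNIV[of "set \<theta>s" F] span assms(3) unfolding F_def by blast
  define \<alpha> where "\<alpha> u = (\<Sum>f\<in>set \<theta>s. c f * f u)" for u
  have "Poly_Mapping.single m 1 * lin_form W \<alpha> \<in> theta_ideal \<Delta> \<theta>s"
    using lin_form_sum_in_theta_ideal[OF fin] assms(4)
    unfolding theta_ideal_def \<alpha>_def W_def by (intro ideal_gen_mult polys_single)
  moreover have "Poly_Mapping.single (m + Poly_Mapping.single u 1) (\<alpha> u) \<in> theta_ideal \<Delta> \<theta>s"
    if "u \<in> W - F" for u
    using single_in_theta_ideal[OF larger] that unfolding W_def F_def by blast
  then have "(\<Sum>u\<in>W - F. Poly_Mapping.single (m + Poly_Mapping.single u 1) (\<alpha> u)) \<in> theta_ideal \<Delta> \<theta>s"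
    unfolding theta_ideal_def by (rule ideal_gen_sum)
  ultimately show ?thesis
    using single_mult_lin_form[of W F w \<alpha> m] fin assms(4,5) c ideal_gen_diff
    unfolding theta_ideal_def \<alpha>_def W_def F_def by fastforce
qed

lemma monomial_in_theta_ideal_if_degree_gt:
  fixes \<theta>s :: "('w \<Rightarrow> 'k::field) list"
  assumes fin: "finite (vertices \<Delta>)"
    and span: "\<forall>F\<in>\<Delta>. fun_space.span (set \<theta>s \<union> vanishing_on F) = UNIV"
    and "Poly_Mapping.keys m \<subseteq> vertices \<Delta>"
    and "card (vertices \<Delta>) < sum (Poly_Mapping.lookup m) (vertices \<Delta>)"
  shows "Poly_Mapping.single m 1 \<in> theta_ideal \<Delta> \<theta>s"
  using assms(3,4)
proof (induction "card (vertices \<Delta>) - card (Poly_Mapping.keys m)" arbitrary: m rule: less_induct)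
  case less
  show ?case
  proof (cases "Poly_Mapping.keys m \<in> \<Delta>")
    case False
    then show ?thesis
      using monomial_in_theta_ideal_if_nonface less.prems by blast
  next
    case True
    obtain w where w: "w \<in> vertices \<Delta>" "2 \<le> Poly_Mapping.lookup m w"
      using exists_exponent_ge_2 fin less.prems(2) by blast
    define m' where "m' = m - Poly_Mapping.single w 1"
    have m: "m = m' + Poly_Mapping.single w 1" and m': "Poly_Mapping.keys m' = Poly_Mapping.keys m"
      using monomial_remove_variable[OF w(2)] unfolding m'_def by simp_all
    have "Poly_Mapping.single (m' + Poly_Mapping.single w 1) 1 \<in> theta_ideal \<Delta> \<theta>s"
    proof (rule monomial_in_theta_ideal_if_face[OF fin span])
      show "Poly_Mapping.keys m' \<in> \<Delta>" "Poly_Mapping.keys m' \<subseteq> vertices \<Delta>" "w \<in> Poly_Mapping.keys m'"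
        using True less.prems(1) w(2) unfolding m' by (auto simp: in_keys_iff)
      fix u
      assume u: "u \<in> vertices \<Delta> - Poly_Mapping.keys m'"
      show "Poly_Mapping.single (m' + Poly_Mapping.single u 1) 1 \<in> theta_ideal \<Delta> \<theta>s"
      proof (rule less.hyps)
        have "card (Poly_Mapping.keys m) < card (vertices \<Delta>)"
          using u less.prems(1) fin unfolding m' by (intro psubset_card_mono) auto
        then show "card (vertices \<Delta>) - card (Poly_Mapping.keys (m' + Poly_Mapping.single u 1))
            < card (vertices \<Delta>) - card (Poly_Mapping.keys m)"
          using u finite_subset[OF less.prems(1) fin] unfolding keys_add_single m' by simp
        show "Poly_Mapping.keys (m' + Poly_Mapping.single u 1) \<subseteq> vertices \<Delta>"
          using u less.prems(1) unfolding keys_add_single m' by blast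
        show "card (vertices \<Delta>) < sum (Poly_Mapping.lookup (m' + Poly_Mapping.single u 1)) (vertices \<Delta>)"
          using less.prems(2)[unfolded m] sum_lookup_add_single[OF fin, of _ m'] u w(1) by simp
      qed
    qed
    then show ?thesis
      unfolding m .
  qed
qed

lemma finite_monomials_degree_le:
  assumes "finite W"
  shows "finite {m :: 'w \<Rightarrow>\<^sub>0 nat. Poly_Mapping.keys m \<subseteq> W \<and> sum (Poly_Mapping.lookup m) W \<le> n}"
    (is "finite ?M")
proof -
  have "Poly_Mapping.lookup m x \<le> n" if "m \<in> ?M" "x \<in> W" for m x
    using that member_le_sum[of x W "Poly_Mapping.lookup m"] assms by auto
  then have "Poly_Mapping.lookup ` ?M \<subseteq> {f. \<forall>x. (x \<in> W \<longrightarrow> f x \<in> {..n}) \<and> (x \<notin> W \<longrightarrow> f x = 0)}"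
    by (auto simp: in_keys_iff)
  moreover have "finite {f. \<forall>x. (x \<in> W \<longrightarrow> f x \<in> {..n}) \<and> (x \<notin> W \<longrightarrow> f x = 0)}"
    using assms by (intro finite_set_of_finite_funs) simp_all
  ultimately have "finite (Poly_Mapping.lookup ` ?M)"
    by (rule finite_subset)
  then show ?thesis
    by (rule finite_imageD) (simp add: inj_on_def poly_mapping_eqI)
qed

lemma poly_mapping_sum_single: "(\<Sum>m\<in>Poly_Mapping.keys p. Poly_Mapping.single m (Poly_Mapping.lookup p m)) = p"
  by (rule poly_mapping_eqI) (simp add: lookup_sum lookup_single when_def in_keys_iff)

lemma high_degree_part_in_theta_ideal:
  fixes \<theta>s :: "('w \<Rightarrow> 'k::field) list"
  assumes fin: "finite (vertices \<Delta>)"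
    and span: "\<forall>F\<in>\<Delta>. fun_space.span (set \<theta>s \<union> vanishing_on F) = UNIV"
    and "p \<in> polys (vertices \<Delta>)"
  defines "M \<equiv> {m. Poly_Mapping.keys m \<subseteq> vertices \<Delta> \<and> sum (Poly_Mapping.lookup m) (vertices \<Delta>) \<le> card (vertices \<Delta>)}"
  shows "p - (\<Sum>m\<in>Poly_Mapping.keys p \<inter> M. Poly_Mapping.single m (Poly_Mapping.lookup p m))
    \<in> theta_ideal \<Delta> \<theta>s"
proof -
  define summand where "summand m = Poly_Mapping.single m (Poly_Mapping.lookup p m)" for m
  define A where "A = sum summand (Poly_Mapping.keys p \<inter> M)"
  define B where "B = sum summand (Poly_Mapping.keys p - M)"
  have "p = A + B"
    using poly_mapping_sum_single[of p] sum.Int_Diff[of "Poly_Mapping.keys p" summand M]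
    unfolding summand_def A_def B_def by simp
  then have "p - A = B"
    by simp
  moreover have "summand m \<in> theta_ideal \<Delta> \<theta>s" if "m \<in> Poly_Mapping.keys p - M" for m
  proof -
    have "Poly_Mapping.keys m \<subseteq> vertices \<Delta>"
      using \<open>p \<in> polys (vertices \<Delta>)\<close> that by (auto simp: polys_def)
    moreover from this have "card (vertices \<Delta>) < sum (Poly_Mapping.lookup m) (vertices \<Delta>)"
      using that by (auto simp: M_def)
    ultimately show ?thesis
      using fin span unfolding summand_def
      by (intro single_in_theta_ideal[OF monomial_in_theta_ideal_if_degree_gt])
  qed
  then have "B \<in> theta_ideal \<Delta> \<theta>s"
    unfolding theta_ideal_def B_def by (rule ideal_gen_sum)
  ultimately show ?thesis
    unfolding A_def summand_def by simp
qed

lemma finite_quotient_if_span: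
  fixes \<theta>s :: "('w \<Rightarrow> 'k::field) list"
  assumes fin: "finite (vertices \<Delta>)"
    and span: "\<forall>F\<in>\<Delta>. fun_space.span (set \<theta>s \<union> vanishing_on F) = UNIV"
  shows "finite_quotient \<Delta> \<theta>s"
proof -
  define W where "W = vertices \<Delta>"
  define M where "M = {m. Poly_Mapping.keys m \<subseteq> W \<and> sum (Poly_Mapping.lookup m) W \<le> card W}"
  define mon where "mon m = Poly_Mapping.single m (1::'k)" for m :: "'w \<Rightarrow>\<^sub>0 nat"
  have "inj mon"
    unfolding mon_def inj_def by (metis lookup_single_eq lookup_single_not_eq one_neq_zero)
  have "finite M"
    using finite_monomials_degree_le[of W] fin unfolding M_def W_def by simp
  have "\<exists>c. p - (\<Sum>s\<in>mon ` M. const_poly (c s) * s) \<in> theta_ideal \<Delta> \<theta>s" if "p \<in> polys W" for p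
  proof -
    let ?c = "\<lambda>s. Poly_Mapping.lookup p (inv mon s)"
    have "(\<Sum>s\<in>mon ` M. const_poly (?c s) * s) = (\<Sum>m\<in>M. Poly_Mapping.single m (Poly_Mapping.lookup p m))"
      using \<open>inj mon\<close> by (simp add: sum.reindex inj_on_subset) (simp add: mon_def const_poly_mult_single)
    also have "\<dots> = (\<Sum>m\<in>Poly_Mapping.keys p \<inter> M. Poly_Mapping.single m (Poly_Mapping.lookup p m))"
      using \<open>finite M\<close> by (intro sum.mono_neutral_right) (auto simp: in_keys_iff)
    finally have "(\<Sum>s\<in>mon ` M. const_poly (?c s) * s)
        = (\<Sum>m\<in>Poly_Mapping.keys p \<inter> M. Poly_Mapping.single m (Poly_Mapping.lookup p m))" .
    moreover have "p - (\<Sum>m\<in>Poly_Mapping.keys p \<inter> M. Poly_Mapping.single m (Poly_Mapping.lookup p m))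
        \<in> theta_ideal \<Delta> \<theta>s"
      using high_degree_part_in_theta_ideal[OF fin span] that unfolding M_def W_def by blast
    ultimately show ?thesis
      by (intro exI[of _ ?c]) simp
  qed
  moreover have "finite (mon ` M)" "mon ` M \<subseteq> polys W"
    using \<open>finite M\<close> by (auto simp: M_def mon_def intro: polys_single)
  ultimately show ?thesis
    unfolding finite_quotient_def theta_ideal_def[symmetric] W_def by blast
qed

section \<open>Homology triangulations\<close>

lemma simplicial_complex_subset: "simplicial_complex \<Delta> \<Longrightarrow> F \<in> \<Delta> \<Longrightarrow> G \<subseteq> F \<Longrightarrow> G \<in> \<Delta>"
  unfolding simplicial_complex_def by blast

lemma simplicial_complex_finite_face: "simplicial_complex \<Delta> \<Longrightarrow> F \<in> \<Delta> \<Longrightarrow> finite F"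
  unfolding simplicial_complex_def by blast

lemma hball_bdD:
  assumes "hball_bd K d \<Gamma> B"
  shows "simplicial_complex \<Gamma>" "has_dim \<Gamma> d" "hsphere K (d - 1) B"
    "\<And>F. F \<in> \<Gamma> \<Longrightarrow> F \<notin> B \<Longrightarrow> hsphere K (d - int (card F)) (link \<Gamma> F)"
    "\<And>F. F \<in> B \<Longrightarrow> F \<noteq> {} \<Longrightarrow> \<exists>B'. hball_bd K (d - int (card F)) (link \<Gamma> F) B'"
  using assms by (cases rule: hball_bd.cases; simp)+

lemma hball_bd_has_dim_link:
  assumes "hball_bd K d \<Gamma> B" "F \<in> \<Gamma>" "F \<noteq> {}"
  shows "has_dim (link \<Gamma> F) (d - int (card F))"
proof (cases "F \<in> B")
  case True
  then show ?thesis
    using hball_bdD(5)[OF assms(1) True assms(3)] hball_bdD(2) by blast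
next
  case False
  then show ?thesis
    using hball_bdD(4)[OF assms(1,2) False] unfolding hsphere_def by blast
qed

lemma homology_triangulationD:
  assumes "homology_triangulation K \<Gamma> \<sigma> V"
  shows "finite V" "simplicial_complex \<Gamma>" "\<And>F. F \<in> \<Gamma> \<Longrightarrow> \<sigma> F \<subseteq> V"
    "\<And>U. U \<subseteq> V \<Longrightarrow> U \<noteq> {} \<Longrightarrow>
       \<exists>B. hball_bd K (int (card U) - 1) (restr \<Gamma> \<sigma> U) B \<and> restr \<Gamma> \<sigma> U - B = {F \<in> \<Gamma>. \<sigma> F = U}"
  using assms unfolding homology_triangulation_def by blast+

lemma card_face_le_card_carrier_bound:
  assumes "homology_triangulation K \<Gamma> \<sigma> V" "U \<subseteq> V" "U \<noteq> {}" "F \<in> \<Gamma>" "\<sigma> F \<subseteq> U"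
  shows "card F \<le> card U"
proof -
  obtain B where "hball_bd K (int (card U) - 1) (restr \<Gamma> \<sigma> U) B"
    using homology_triangulationD(4)[OF assms(1-3)] by blast
  then have "has_dim (restr \<Gamma> \<sigma> U) (int (card U) - 1)"
    by (rule hball_bdD)
  then show ?thesis
    using assms(4,5) unfolding has_dim_def restr_def by fastforce
qed

lemma sc_dim_restr_le:
  assumes "homology_triangulation K \<Gamma> \<sigma> V" "U \<subseteq> V" "U \<noteq> {}"
  shows "sc_dim (restr \<Gamma> \<sigma> U) \<le> int (card U) - 1"
proof -
  have "finite (restr \<Gamma> \<sigma> U)"
    using homology_triangulationD(2)[OF assms(1)] unfolding simplicial_complex_def restr_def by simp
  then have "Max (insert 0 (card ` restr \<Gamma> \<sigma> U)) \<le> card U"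
    using card_face_le_card_carrier_bound[OF assms] by (intro Max.boundedI) (auto simp: restr_def)
  then show ?thesis
    unfolding sc_dim_def by simp
qed

lemma carrier_nonempty:
  assumes "homology_triangulation K \<Gamma> \<sigma> V" "V \<noteq> {}" "F \<in> \<Gamma>" "F \<noteq> {}"
  shows "\<sigma> F \<noteq> {}"
proof
  assume empty: "\<sigma> F = {}"
  obtain v where "v \<in> V"
    using assms(2) by blast
  then obtain B where B: "hball_bd K 0 (restr \<Gamma> \<sigma> {v}) B"
    and interior: "restr \<Gamma> \<sigma> {v} - B = {F \<in> \<Gamma>. \<sigma> F = {v}}"
    using homology_triangulationD(4)[OF assms(1), of "{v}"] by auto
  \<comment> \<open>the boundary of a 0-ball contains only the empty face\<close>
  have "has_dim B (-1)"
    using hball_bdD(3)[OF B] unfolding hsphere_def by simp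
  moreover have "card F \<noteq> 0"
    using assms(4) simplicial_complex_finite_face[OF homology_triangulationD(2)[OF assms(1)] assms(3)]
    by simp
  ultimately have "F \<notin> B"
    unfolding has_dim_def by fastforce
  then have "\<sigma> F = {v}"
    using interior assms(3) empty unfolding restr_def by blast
  then show False
    using empty by simp
qed

lemma carrier_mono:
  assumes "homology_triangulation K \<Gamma> \<sigma> V" "V \<noteq> {}" "F \<in> \<Gamma>" "G \<subseteq> F"
  shows "\<sigma> G \<subseteq> \<sigma> F"
proof (cases "F = {}")
  case False
  then have "\<sigma> F \<noteq> {}"
    using carrier_nonempty[OF assms(1-3)] by blast
  then obtain B where "hball_bd K (int (card (\<sigma> F)) - 1) (restr \<Gamma> \<sigma> (\<sigma> F)) B"
    using homology_triangulationD(3,4)[OF assms(1)] assms(3) by blast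
  then have "simplicial_complex (restr \<Gamma> \<sigma> (\<sigma> F))"
    by (rule hball_bdD)
  moreover have "F \<in> restr \<Gamma> \<sigma> (\<sigma> F)"
    using assms(3) unfolding restr_def by simp
  ultimately have "G \<in> restr \<Gamma> \<sigma> (\<sigma> F)"
    using assms(4) by (rule simplicial_complex_subset)
  then show ?thesis
    unfolding restr_def by simp
qed (use assms(4) in simp)

lemma link_eq_empty_face_if_maximal:
  assumes "simplicial_complex \<Gamma>" "H \<in> \<Gamma>" "\<And>F. F \<in> \<Gamma> \<Longrightarrow> H \<subseteq> F \<Longrightarrow> F = H"
  shows "link \<Gamma> H = {{}}"
proof
  have "G = {}" if "G \<in> link \<Gamma> H" for G
  proof -
    have "G \<union> H = H" "G \<inter> H = {}"
      using that assms(3)[of "G \<union> H"] unfolding link_def by auto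
    then show ?thesis
      by blast
  qed
  then show "link \<Gamma> H \<subseteq> {{}}"
    by blast
  show "{{}} \<subseteq> link \<Gamma> H"
    using simplicial_complex_subset[OF assms(1,2), of "{}"] assms(2) unfolding link_def by simp
qed

lemma face_subset_facet:
  assumes "homology_triangulation K \<Gamma> \<sigma> V" "V \<noteq> {}" "E \<in> \<Gamma>"
  shows "\<exists>H\<in>\<Gamma>. E \<subseteq> H \<and> card H = card V"
proof -
  have sc: "simplicial_complex \<Gamma>"
    using assms(1) by (rule homology_triangulationD)
  obtain H where H: "H \<in> \<Gamma>" "E \<subseteq> H" and "\<forall>F\<in>\<Gamma>. H \<subseteq> F \<longrightarrow> H = F"
    using finite_has_maximal2[OF _ assms(3)] sc unfolding simplicial_complex_def by blast
  then have maximal: "\<And>F. F \<in> \<Gamma> \<Longrightarrow> H \<subseteq> F \<Longrightarrow> F = H"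
    by (metis (full_types))
  have "restr \<Gamma> \<sigma> V = \<Gamma>"
    using homology_triangulationD(3)[OF assms(1)] unfolding restr_def by blast
  then obtain B where B: "hball_bd K (int (card V) - 1) \<Gamma> B"
    using homology_triangulationD(4)[OF assms(1) order_refl assms(2)] by metis
  have "card H = card V"
  proof (cases "H = {}")
    case True
    obtain F where F: "F \<in> \<Gamma>" "card F = card V"
      using hball_bdD(2)[OF B] unfolding has_dim_def by auto
    moreover have "card V \<noteq> 0"
      using assms(2) homology_triangulationD(1)[OF assms(1)] by simp
    ultimately show ?thesis
      using maximal[OF F(1)] True by simp
  next
    case False
    then have "has_dim (link \<Gamma> H) (int (card V) - 1 - int (card H))"
      by (rule hball_bd_has_dim_link[OF B H(1)])
    then show ?thesis
      using link_eq_empty_face_if_maximal[OF sc H(1) maximal] by (simp add: has_dim_def)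
  qed
  then show ?thesis
    using H by blast
qed

section \<open>Matchings from quasi-geometricity\<close>

lemma Diff_in_link:
  assumes "simplicial_complex \<Gamma>" "H \<in> \<Gamma>" "E \<subseteq> H"
  shows "H - E \<in> link \<Gamma> E"
proof -
  have "H - E \<in> \<Gamma>"
    using simplicial_complex_subset[OF assms(1,2)] by blast
  moreover have "(H - E) \<union> E = H"
    using assms(3) by blast
  ultimately show ?thesis
    using assms(2) unfolding link_def by auto
qed

lemma quasi_geometric_card_face_le:
  assumes ht: "homology_triangulation K \<Gamma> \<sigma> V" and "V \<noteq> {}" and qg: "quasi_geometric \<Gamma> \<sigma> V"
    and "W \<in> \<Gamma>" "U \<subseteq> V" "\<And>w. w \<in> W \<Longrightarrow> \<sigma> {w} \<subseteq> U"
  shows "card W \<le> card U"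
proof (cases "W = {}")
  case False
  then obtain w where "w \<in> W"
    by blast
  moreover have "{w} \<in> \<Gamma>"
    using simplicial_complex_subset[OF homology_triangulationD(2)[OF ht] \<open>W \<in> \<Gamma>\<close>] \<open>w \<in> W\<close> by blast
  ultimately have "U \<noteq> {}"
    using assms(6) carrier_nonempty[OF ht \<open>V \<noteq> {}\<close>] by blast
  then have "sc_dim (restr \<Gamma> \<sigma> U) \<le> int (card U) - 1"
    by (rule sc_dim_restr_le[OF ht \<open>U \<subseteq> V\<close>])
  moreover have "\<not> sc_dim (restr \<Gamma> \<sigma> U) < int (card W) - 1"
    using qg \<open>W \<in> \<Gamma>\<close> \<open>U \<subseteq> V\<close> assms(6) unfolding quasi_geometric_def by blast
  ultimately show ?thesis
    by simp
qed simp

text \<open>The vertices of \<open>H\<close> without a neighbour in \<open>T\<close> form a face all of whose vertices have carriers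
  inside \<open>V - T\<close>; quasi-geometricity bounds its size by \<open>|V - T|\<close>.\<close>

lemma quasi_geometric_hall_condition:
  assumes ht: "homology_triangulation K \<Gamma> \<sigma> V" and "V \<noteq> {}" and qg: "quasi_geometric \<Gamma> \<sigma> V"
    and "E \<in> \<Gamma>" "H \<in> \<Gamma>" "E \<subseteq> H" "card H = card V"
  shows "hall_condition (\<lambda>v w. v \<in> \<sigma> {w}) (V - \<sigma> E) (H - E)"
  unfolding hall_condition_def
proof (intro allI impI)
  fix T
  assume T: "T \<subseteq> V - \<sigma> E"
  define N where "N = neighbours (\<lambda>v w. v \<in> \<sigma> {w}) (H - E) T"
  define W where "W = H - N"
  have sc: "simplicial_complex \<Gamma>" and "finite V"
    using ht by (rule homology_triangulationD)+
  have "finite H" "N \<subseteq> H"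
    using simplicial_complex_finite_face[OF sc \<open>H \<in> \<Gamma>\<close>] unfolding N_def neighbours_def by auto
  have "W \<in> \<Gamma>"
    using simplicial_complex_subset[OF sc \<open>H \<in> \<Gamma>\<close>] unfolding W_def by blast
  have carriers: "\<sigma> {w} \<subseteq> V - T" if "w \<in> W" for w
  proof -
    have "{w} \<in> \<Gamma>"
      using simplicial_complex_subset[OF sc \<open>W \<in> \<Gamma>\<close>] that by blast
    moreover have "v \<notin> \<sigma> {w}" if "v \<in> T" for v
      using carrier_mono[OF ht \<open>V \<noteq> {}\<close> \<open>E \<in> \<Gamma>\<close>, of "{w}"] \<open>w \<in> W\<close> T that
      unfolding W_def N_def neighbours_def by (cases "w \<in> E") auto
    ultimately show ?thesis
      using homology_triangulationD(3)[OF ht] by blast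
  qed
  have "card W \<le> card (V - T)"
    using quasi_geometric_card_face_le[OF ht \<open>V \<noteq> {}\<close> qg \<open>W \<in> \<Gamma>\<close> _ carriers] by blast
  moreover have "card W = card H - card N" "card (V - T) = card V - card T"
    using \<open>N \<subseteq> H\<close> \<open>finite H\<close> \<open>finite V\<close> T unfolding W_def
    by (auto intro!: card_Diff_subset intro: finite_subset)
  moreover have "card N \<le> card H" "card T \<le> card V"
    using \<open>N \<subseteq> H\<close> \<open>finite H\<close> \<open>finite V\<close> T by (auto intro!: card_mono)
  ultimately show "card T \<le> card (neighbours (\<lambda>v w. v \<in> \<sigma> {w}) (H - E) T)"
    using \<open>card H = card V\<close> unfolding N_def by linarith
qed

lemma facet_matching:
  assumes ht: "homology_triangulation K \<Gamma> \<sigma> V" and "V \<noteq> {}" and "quasi_geometric \<Gamma> \<sigma> V"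
    and "E \<in> \<Gamma>" "H \<in> \<Gamma>" "E \<subseteq> H" "card H = card V"
  shows "\<exists>f. matching (\<lambda>v w. v \<in> \<sigma> {w}) (V - \<sigma> E) (H - E) f"
proof (rule hall_marriage)
  show "finite (V - \<sigma> E)" "finite (H - E)"
    using homology_triangulationD(1,2)[OF ht] simplicial_complex_finite_face \<open>H \<in> \<Gamma>\<close> by auto
qed (rule quasi_geometric_hall_condition[OF assms])

lemma card_Diff_carrier_le:
  assumes ht: "homology_triangulation K \<Gamma> \<sigma> V" and "V \<noteq> {}" and "quasi_geometric \<Gamma> \<sigma> V"
    and "E \<in> \<Gamma>"
  shows "card (V - \<sigma> E) \<le> card V - card E"
proof -
  obtain H where H: "H \<in> \<Gamma>" "E \<subseteq> H" "card H = card V"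
    using face_subset_facet[OF ht \<open>V \<noteq> {}\<close> \<open>E \<in> \<Gamma>\<close>] by blast
  then obtain f where "matching (\<lambda>v w. v \<in> \<sigma> {w}) (V - \<sigma> E) (H - E) f"
    using facet_matching[OF assms] by blast
  then have "card (V - \<sigma> E) \<le> card (H - E)"
    using simplicial_complex_finite_face[OF homology_triangulationD(2)[OF ht] H(1)]
    unfolding matching_def by (intro card_inj_on_le) auto
  also have "\<dots> = card V - card E"
    using H simplicial_complex_finite_face[OF homology_triangulationD(2)[OF ht] H(1)]
    by (simp add: card_Diff_subset finite_subset)
  finally show ?thesis .
qed

section \<open>Special systems of parameters\<close>

text \<open>A special l.s.o.p. is indexed by \<open>Inl v\<close> for \<open>v \<in> V - \<sigma> E\<close>, where the form must be supported on
  vertices whose carrier contains \<open>v\<close>, and by \<open>Inr n\<close> for the remaining, unconstrained forms.\<close>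

definition special_index :: "'v set \<Rightarrow> nat \<Rightarrow> ('v + nat) set" where
  "special_index X m = Inl ` X \<union> Inr ` {..<m - card X}"

definition admissible_forms ::
  "'w set set \<Rightarrow> ('w set \<Rightarrow> 'v set) \<Rightarrow> 'w set \<Rightarrow> 'v + nat \<Rightarrow> ('w \<Rightarrow> 'k::zero) set" where
  "admissible_forms \<Gamma> \<sigma> E i =
     {\<theta>. supp \<theta> \<subseteq> {w \<in> vertices (link \<Gamma> E). case i of Inl v \<Rightarrow> v \<in> \<sigma> {w} | Inr _ \<Rightarrow> True}}"

lemma finite_special_index: "finite X \<Longrightarrow> finite (special_index X m)"
  unfolding special_index_def by simp

lemma card_special_index:
  assumes "finite X" "card X \<le> m"
  shows "card (special_index X m) = m"
  unfolding special_index_def using assms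
  by (subst card_Un_disjoint) (auto simp: card_image)

lemma subspace_admissible_forms:
  "fun_space.subspace (admissible_forms \<Gamma> \<sigma> E i :: ('w \<Rightarrow> 'k::field) set)"
  unfolding admissible_forms_def by (rule subspace_supp_subset)

lemma indicator_in_admissible_forms:
  assumes "u \<in> vertices (link \<Gamma> E)" "\<And>v. i = Inl v \<Longrightarrow> v \<in> \<sigma> {u}"
  shows "(indicator {u} :: 'w \<Rightarrow> 'k::zero_neq_one) \<in> admissible_forms \<Gamma> \<sigma> E i"
  using assms unfolding admissible_forms_def by (cases i) (auto simp: supp_indicator_singleton)

lemma exists_extension_onto:
  assumes "inj_on g X" "g ` X \<subseteq> Y" "finite Y" "card Y = card X + n"
  shows "\<exists>\<beta>. (\<forall>x\<in>X. \<beta> (Inl x) = g x) \<and> \<beta> ` (Inl ` X \<union> Inr ` {..<n}) = Y"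
proof -
  have "card (Y - g ` X) = n"
    using assms by (simp add: card_Diff_subset card_image finite_subset)
  then obtain h where h: "bij_betw h {..<n} (Y - g ` X)"
    using ex_bij_betw_nat_finite[of "Y - g ` X"] assms(3) by (auto simp: atLeast0LessThan)
  have "case_sum g h ` (Inl ` X \<union> Inr ` {..<n}) = g ` X \<union> h ` {..<n}"
    by (auto simp: image_Un image_image)
  also have "\<dots> = Y"
    using h assms(2) unfolding bij_betw_def by blast
  finally show ?thesis
    by (intro exI[of _ "case_sum g h"]) simp
qed

lemma admissible_forms_nonzero:
  assumes ht: "homology_triangulation K \<Gamma> \<sigma> V" and "V \<noteq> {}" and "quasi_geometric \<Gamma> \<sigma> V"
    and "E \<in> \<Gamma>" "v \<in> V - \<sigma> E"
  shows "\<exists>\<theta>\<in>admissible_forms \<Gamma> \<sigma> E (Inl v). \<theta> \<noteq> (0 :: 'w::linorder \<Rightarrow> 'k::field)"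
proof -
  obtain H where H: "H \<in> \<Gamma>" "E \<subseteq> H" "card H = card V"
    using face_subset_facet[OF ht \<open>V \<noteq> {}\<close> \<open>E \<in> \<Gamma>\<close>] by blast
  then obtain f where "matching (\<lambda>v w. v \<in> \<sigma> {w}) (V - \<sigma> E) (H - E) f"
    using facet_matching[OF assms(1-4)] by blast
  then have "f v \<in> vertices (link \<Gamma> E)" "v \<in> \<sigma> {f v}"
    using Diff_in_link[OF homology_triangulationD(2)[OF ht] H(1,2)] \<open>v \<in> V - \<sigma> E\<close>
    unfolding matching_def vertices_def by blast+
  then have "(indicator {f v} :: 'w \<Rightarrow> 'k) \<in> admissible_forms \<Gamma> \<sigma> E (Inl v)"
    by (intro indicator_in_admissible_forms) auto
  moreover have "(indicator {f v} :: 'w \<Rightarrow> 'k) \<noteq> 0"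
    using supp_indicator_singleton[of "f v", where 'k = 'k] unfolding supp_def by auto
  ultimately show ?thesis
    by blast
qed

lemma admissible_family_spanning_face:
  assumes ht: "homology_triangulation K \<Gamma> \<sigma> V" and "V \<noteq> {}" and "quasi_geometric \<Gamma> \<sigma> V"
    and "E \<in> \<Gamma>" "G \<in> link \<Gamma> E"
  defines "I \<equiv> special_index (V - \<sigma> E) (card V - card E)"
  shows "\<exists>\<theta>. (\<forall>i\<in>I. \<theta> i \<in> admissible_forms \<Gamma> \<sigma> E i)
           \<and> fun_space.span (\<theta> ` I \<union> vanishing_on G) = (UNIV :: ('w::linorder \<Rightarrow> 'k::field) set)"
proof -
  have sc: "simplicial_complex \<Gamma>"
    using ht by (rule homology_triangulationD)
  have "G \<union> E \<in> \<Gamma>" "G \<inter> E = {}"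
    using \<open>G \<in> link \<Gamma> E\<close> unfolding link_def by auto
  then obtain H where H: "H \<in> \<Gamma>" "G \<union> E \<subseteq> H" "card H = card V"
    using face_subset_facet[OF ht \<open>V \<noteq> {}\<close>] by blast
  then have "E \<subseteq> H" "G \<subseteq> H - E" "finite H"
    using \<open>G \<inter> E = {}\<close> simplicial_complex_finite_face[OF sc H(1)] by auto
  obtain f where f: "matching (\<lambda>v w. v \<in> \<sigma> {w}) (V - \<sigma> E) (H - E) f"
    using facet_matching[OF assms(1-4) H(1) \<open>E \<subseteq> H\<close> H(3)] by blast
  have "card (H - E) = card (V - \<sigma> E) + (card V - card E - card (V - \<sigma> E))"
    using card_Diff_carrier_le[OF assms(1-4)] H(3) \<open>E \<subseteq> H\<close> \<open>finite H\<close>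
    by (simp add: card_Diff_subset finite_subset)
  moreover have "inj_on f (V - \<sigma> E)" "f ` (V - \<sigma> E) \<subseteq> H - E"
    using f unfolding matching_def by auto
  ultimately obtain \<beta> where \<beta>: "\<forall>v\<in>V - \<sigma> E. \<beta> (Inl v) = f v" "\<beta> ` I = H - E"
    using exists_extension_onto[of f "V - \<sigma> E" "H - E"] \<open>finite H\<close>
    unfolding I_def special_index_def by auto
  have "H - E \<subseteq> vertices (link \<Gamma> E)"
    using Diff_in_link[OF sc H(1) \<open>E \<subseteq> H\<close>] unfolding vertices_def by blast
  then have "\<forall>i\<in>I. indicator {\<beta> i} \<in> admissible_forms \<Gamma> \<sigma> E i"
    using \<beta> f unfolding I_def special_index_def matching_def
    by (auto intro!: indicator_in_admissible_forms)
  moreover have "fun_space.span ((\<lambda>i. indicator {\<beta> i}) ` I \<union> vanishing_on G) = UNIV"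
    using \<open>G \<subseteq> H - E\<close> \<open>finite H\<close> image_image[of "\<lambda>u. indicator {u}" \<beta> I] \<beta>(2)
    by (intro span_eq_UNIV_if_indicators) (auto intro: finite_subset)
  ultimately show ?thesis
    by (intro exI[of _ "\<lambda>i. indicator {\<beta> i}"]) blast
qed

lemma special_lsop_if_admissible_spanning:
  fixes \<theta> :: "'v + nat \<Rightarrow> 'w \<Rightarrow> 'k::field"
  assumes "finite (vertices (link \<Gamma> E))" "finite I" "card I = card V - card E"
    and "\<forall>i\<in>I. \<theta> i \<in> admissible_forms \<Gamma> \<sigma> E i" "Inl ` (V - \<sigma> E) \<subseteq> I" "inj_on \<theta> (Inl ` (V - \<sigma> E))"
    and "\<forall>F\<in>link \<Gamma> E. fun_space.span (\<theta> ` I \<union> vanishing_on F) = UNIV"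
  shows "\<exists>\<theta>s :: ('w \<Rightarrow> 'k) list. special_lsop \<Gamma> \<sigma> V E \<theta>s"
proof -
  obtain idx where "set idx = I" "distinct idx"
    using finite_distinct_list[OF \<open>finite I\<close>] by blast
  then have set: "set (map \<theta> idx) = \<theta> ` I" and "length (map \<theta> idx) = card V - card E"
    using assms(3) distinct_card by fastforce+
  moreover have "\<forall>\<phi>\<in>set (map \<theta> idx). \<forall>w. w \<notin> vertices (link \<Gamma> E) \<longrightarrow> \<phi> w = 0"
    using assms(4) unfolding set admissible_forms_def supp_def by blast
  moreover have "finite_quotient (link \<Gamma> E) (map \<theta> idx)"
    by (rule finite_quotient_if_span) (use assms(1,7) set in auto)
  moreover have "\<theta> (Inl v) \<in> set (map \<theta> idx)
      \<and> supp (\<theta> (Inl v)) \<subseteq> {w \<in> vertices (link \<Gamma> E). v \<in> \<sigma> {w}}" if "v \<in> V - \<sigma> E" for v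
  proof -
    have "Inl v \<in> I"
      using assms(5) that by blast
    then have "\<theta> (Inl v) \<in> admissible_forms \<Gamma> \<sigma> E (Inl v)"
      using assms(4) by blast
    then show ?thesis
      using \<open>Inl v \<in> I\<close> unfolding set admissible_forms_def by auto
  qed
  moreover have "inj_on (\<lambda>v. \<theta> (Inl v)) (V - \<sigma> E)"
    using assms(6) by (auto simp: inj_on_def)
  ultimately have "special_lsop \<Gamma> \<sigma> V E (map \<theta> idx)"
    unfolding special_lsop_def lsop_def by (intro conjI exI[of _ "\<lambda>v. \<theta> (Inl v)"]) blast+
  then show ?thesis ..
qed

lemma exists_admissible_spanning_family:
  assumes "infinite (UNIV :: 'k::field set)" and ht: "homology_triangulation K \<Gamma> \<sigma> V"
    and "V \<noteq> {}" "quasi_geometric \<Gamma> \<sigma> V" "E \<in> \<Gamma>"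
  defines "I \<equiv> special_index (V - \<sigma> E) (card V - card E)"
  shows "\<exists>\<theta> :: 'v + nat \<Rightarrow> 'w::linorder \<Rightarrow> 'k. (\<forall>i\<in>I. \<theta> i \<in> admissible_forms \<Gamma> \<sigma> E i)
           \<and> inj_on \<theta> (Inl ` (V - \<sigma> E))
           \<and> (\<forall>Z\<in>vanishing_on ` link \<Gamma> E. fun_space.span (\<theta> ` I \<union> Z) = UNIV)"
proof (rule fun_space.generic_choice[OF assms(1)])
  show "finite I"
    using homology_triangulationD(1)[OF ht] unfolding I_def by (simp add: finite_special_index)
  show "Inl ` (V - \<sigma> E) \<subseteq> I"
    unfolding I_def special_index_def by blast
  show "finite (vanishing_on ` link \<Gamma> E)"
    using homology_triangulationD(2)[OF ht] unfolding simplicial_complex_def link_def by simp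
  show "fun_space.subspace (admissible_forms \<Gamma> \<sigma> E i :: ('w \<Rightarrow> 'k) set)" for i
    by (rule subspace_admissible_forms)
  show "\<exists>y\<in>admissible_forms \<Gamma> \<sigma> E j. y \<noteq> (0 :: 'w \<Rightarrow> 'k)" if "j \<in> Inl ` (V - \<sigma> E)" for j
    using that admissible_forms_nonzero[OF ht assms(3-5)] by blast
  show "\<exists>\<theta>. (\<forall>i\<in>I. \<theta> i \<in> admissible_forms \<Gamma> \<sigma> E i) \<and> fun_space.span (\<theta> ` I \<union> Z) = UNIV"
    if "Z \<in> vanishing_on ` link \<Gamma> E" for Z
    using that admissible_family_spanning_face[OF ht assms(3-5)] unfolding I_def by auto
qed

theorem proposition2p4:
  fixes \<Gamma> :: "'w::linorder set set" and \<sigma> :: "'w set \<Rightarrow> 'v set" and V :: "'v set"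
    and E :: "'w set"
  assumes "infinite (UNIV :: 'k::field set)"
    and "V \<noteq> {}"
    and "homology_triangulation TYPE('k) \<Gamma> \<sigma> V"
    and "quasi_geometric \<Gamma> \<sigma> V"
    and "E \<in> \<Gamma>"
  shows "\<exists>\<theta>s :: ('w \<Rightarrow> 'k) list. special_lsop \<Gamma> \<sigma> V E \<theta>s"
proof -
  define I where "I = special_index (V - \<sigma> E) (card V - card E)"
  have sc: "simplicial_complex \<Gamma>" and "finite V"
    using assms(3) by (rule homology_triangulationD)+
  then have "finite I" "card I = card V - card E"
    using card_Diff_carrier_le[OF assms(3,2,4,5)]
    unfolding I_def by (simp_all add: finite_special_index card_special_index)
  moreover have "finite (vertices (link \<Gamma> E))"
    using sc unfolding simplicial_complex_def vertices_def link_def by auto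
  moreover have "Inl ` (V - \<sigma> E) \<subseteq> I"
    unfolding I_def special_index_def by blast
  moreover obtain \<theta> :: "'v + nat \<Rightarrow> 'w \<Rightarrow> 'k" where "\<forall>i\<in>I. \<theta> i \<in> admissible_forms \<Gamma> \<sigma> E i"
    "inj_on \<theta> (Inl ` (V - \<sigma> E))" "\<forall>Z\<in>vanishing_on ` link \<Gamma> E. fun_space.span (\<theta> ` I \<union> Z) = UNIV"
    using exists_admissible_spanning_family[OF assms(1,3,2,4,5)] unfolding I_def by blast
  ultimately show ?thesis
    by (intro special_lsop_if_admissible_spanning[where \<theta> = \<theta>]) simp_all
qed

end
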